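(* Let $X$ be a sum of finitely many independent Bernoulli random variables, with distribution $P$ and mean $\lambda>0$. For $t\ge0$ let $X_t=X+Z_t$ where $Z_t\sim\mathrm{Po}(t)$ is independent of $X$, let $P_t(r)=\Pr(X_t=r)$ and $\widetilde P_t(r)=\frac{(r+1)\Pr(X_t=r+1)}{\lambda+t}$ for $r\in\mathbb{Z}_+$. Then $$D(P\,\|\,\mathrm{Po}(\lambda))=\int_0^\infty D(P_t\,\|\,\widetilde P_t)\,dt.$$
   Context: $\mathrm{Po}(\lambda)$ is the Poisson distribution with mean $\lambda$; $D(P\|Q)=\sum_x P(x)\log\frac{P(x)}{Q(x)}$ is relative entropy (natural logarithm, conventions $0\log(0/a)=0$, $a\log(a/0)=\infty$). Note $\widetilde P_t$ is a probability distribution on $\mathbb{Z}_+$ since $E(X_t)=\lambda+t$. *)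

theory Defs
  imports "HOL-Probability.Probability"
begin

text \<open>Poisson distribution Po(t) for t \<ge> 0; Po(0) is the point mass at 0
  (the library's poisson_pmf is only specified for positive rate).\<close>
definition Po :: "real \<Rightarrow> nat pmf" where
  "Po t = (if t = 0 then return_pmf 0 else poisson_pmf t)"

text \<open>The value lies in (-\<infinity>, \<infinity>]: for probability distributions the negative
  parts of the terms are always summable, so a non-summable series diverges to +\<infinity>.\<close>
definition rel_entropy :: "(nat \<Rightarrow> real) \<Rightarrow> (nat \<Rightarrow> real) \<Rightarrow> ereal" where
  "rel_entropy P Q =
     (if \<exists>x. P x > 0 \<and> Q x = 0 then \<infinity>
      else if (\<lambda>x. if P x = 0 then 0 else P x * ln (P x / Q x)) summable_on UNIV
      then ereal (\<Sum>\<^sub>\<infinity>x. if P x = 0 then 0 else P x * ln (P x / Q x))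
      else \<infinity>)"

definition bernoulli_sum_pmf :: "nat \<Rightarrow> (nat \<Rightarrow> real) \<Rightarrow> nat pmf" where
  "bernoulli_sum_pmf n p =
     map_pmf (\<lambda>b. \<Sum>i<n. of_bool (b i)) (Pi_pmf {..<n} False (\<lambda>i. bernoulli_pmf (p i)))"

definition add_poisson :: "nat pmf \<Rightarrow> real \<Rightarrow> nat pmf" where
  "add_poisson P t = map_pmf (\<lambda>(x, z). x + z) (pair_pmf P (Po t))"

end

theory Submission
  imports Defs "HOL-Real_Asymp.Real_Asymp"
begin

text \<open>
  Both \<open>P\<^sub>t\<close> and \<open>Po(\<lambda> + t)\<close> solve
  \<open>\<partial>\<^sub>t f(r) = f(r - 1) - f(r)\<close>, and \<open>Po(\<lambda> + t)\<close> is a fixed point of the size-biased shift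
  \<open>Q \<mapsto> Q~\<close>. Differentiating \<open>A(t) = D(P\<^sub>t \<parallel> Po(\<lambda> + t))\<close> term by term therefore gives
  \<open>A'(t) = - D(P\<^sub>t \<parallel> P~\<^sub>t)\<close>. The function \<open>A\<close> is continuous at \<open>0\<close>, and by convexity
  \<open>A(t) \<le> \<Sum>\<^sub>k P(k) D(\<delta>\<^sub>k * Po(t) \<parallel> Po(\<lambda> + t)) \<rightarrow> 0\<close> as \<open>t \<rightarrow> \<infinity>\<close>, so the identity is
  the fundamental theorem of calculus on \<open>(0, \<infinity>)\<close>. Termwise differentiation and continuity
  are justified by dominating \<open>P\<^sub>t(r)\<close> by an exponential series and the log-ratios by \<open>4\<^sup>r\<close>.
\<close>

lemma diff_le_mult_ln_div:
  fixes x y :: real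
  assumes "0 \<le> x" "0 < y"
  shows "x - y \<le> x * ln (x / y)"
proof (cases "x = 0")
  case False
  with assms have x: "0 < x" by simp
  have "ln (y / x) \<le> y / x - 1"
    using x assms by (intro ln_le_minus_one) auto
  moreover have "ln (x / y) = - ln (y / x)"
    using x assms by (simp add: ln_div)
  ultimately have "x * (1 - y / x) \<le> x * ln (x / y)"
    using x by (intro mult_left_mono) auto
  moreover have "x * (1 - y / x) = x - y"
    using x by (simp add: field_simps)
  ultimately show ?thesis
    by simp
qed (use assms in simp)

lemma abs_mult_ln_le_1:
  fixes x :: real
  assumes "0 \<le> x" "x \<le> 1"
  shows "\<bar>x * ln x\<bar> \<le> 1"
proof (cases "x = 0")
  case False
  with assms have x: "0 < x" by simp
  have "- ln x \<le> 1 / x - 1"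
    using ln_le_minus_one[of "1 / x"] x by (simp add: ln_div)
  then have "x * - ln x \<le> 1 - x"
    using x by (simp add: field_simps)
  moreover have "x * ln x \<le> 0"
    using x assms by (simp add: mult_nonneg_nonpos)
  ultimately show ?thesis
    using x by simp
qed simp

lemma power_mult_neg_ln_le_1:
  fixes t :: real
  assumes "0 < t" "t \<le> 1" "0 < j"
  shows "t ^ j * - ln t \<le> 1"
proof -
  have "- ln t \<le> 1 / t - 1"
    using ln_le_minus_one[of "1 / t"] assms by (simp add: ln_div)
  then have "t * - ln t \<le> 1"
    using assms by (simp add: field_simps)
  moreover have "t ^ j \<le> t"
    using assms power_decreasing[of 1 j t] by simp
  moreover have "0 \<le> - ln t"
    using assms by simp
  ultimately show ?thesis
    by (meson mult_right_mono order_trans)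
qed

lemma one_plus_square_le_four_power: "(1 + real r)\<^sup>2 \<le> 4 ^ r"
proof (induction r)
  case (Suc r)
  have "(1 + real (Suc r))\<^sup>2 \<le> 4 * (1 + real r)\<^sup>2"
    by (simp add: power2_eq_square algebra_simps)
  also have "\<dots> \<le> 4 * 4 ^ r"
    using Suc by simp
  finally show ?case by simp
qed simp

lemma quadratic_le_four_power:
  fixes a b c :: real
  assumes "0 \<le> a" "0 \<le> b" "0 \<le> c"
  shows "a + b * real r + c * (real r * real r) \<le> (a + b + c) * 4 ^ r"
proof -
  have "1 \<le> (1 + real r)\<^sup>2" "real r \<le> (1 + real r)\<^sup>2" "real r * real r \<le> (1 + real r)\<^sup>2"
    by (simp_all add: power2_eq_square algebra_simps)
  then have "1 \<le> (4::real) ^ r" "real r \<le> 4 ^ r" "real r * real r \<le> 4 ^ r"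
    using one_plus_square_le_four_power[of r] by linarith+
  then have "a * 1 + b * real r + c * (real r * real r) \<le> a * 4 ^ r + b * 4 ^ r + c * 4 ^ r"
    using assms by (intro add_mono mult_left_mono) auto
  then show ?thesis
    by (simp add: algebra_simps)
qed

lemma ln_fact_le_square: "ln (fact j) \<le> real j * real j"
proof (cases "j = 0")
  case False
  have "ln (fact j) \<le> ln (real j ^ j)"
    using False fact_le_power[of j, where 'a=real] by (subst ln_le_cancel_iff) auto
  also have "\<dots> = real j * ln (real j)"
    by (simp add: ln_realpow)
  also have "\<dots> \<le> real j * real j"
    using False ln_le_minus_one[of "real j"] by (intro mult_left_mono) auto
  finally show ?thesis .
qed simp

lemma fact_add_le: "fact (j + k) \<le> fact j * real (j + k) ^ k"
proof (induction k)
  case (Suc k)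
  have "fact (j + Suc k) = real (Suc (j + k)) * fact (j + k)"
    by simp
  also have "\<dots> \<le> real (Suc (j + k)) * (fact j * real (j + k) ^ k)"
    using Suc by (intro mult_left_mono) auto
  also have "\<dots> \<le> real (Suc (j + k)) * (fact j * real (j + Suc k) ^ k)"
    by (intro mult_left_mono power_mono) auto
  also have "\<dots> = fact j * real (j + Suc k) ^ Suc k"
    by simp
  finally show ?case .
qed simp

lemma mult_ln_div_tangent_le:
  fixes x s Q :: real
  assumes "0 \<le> x" "0 < s" "0 < Q"
  shows "x * ln (s / Q) + (x - s) \<le> x * ln (x / Q)"
proof (cases "x = 0")
  case False
  with assms have "0 < x" by simp
  have "x - s \<le> x * ln (x / s)"
    using \<open>0 < x\<close> assms by (intro diff_le_mult_ln_div) auto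
  also have "x * ln (x / s) = x * ln (x / Q) - x * ln (s / Q)"
    using \<open>0 < x\<close> assms by (simp add: ln_div algebra_simps)
  finally show ?thesis
    by simp
qed (use assms in simp)

lemma jensen_mult_ln_div:
  fixes c x :: "'i \<Rightarrow> real"
  assumes I: "finite I" and c: "\<And>i. i \<in> I \<Longrightarrow> 0 \<le> c i" "sum c I = 1"
    and x: "\<And>i. i \<in> I \<Longrightarrow> 0 \<le> x i" and Q: "0 < Q"
  shows "(\<Sum>i\<in>I. c i * x i) * ln ((\<Sum>i\<in>I. c i * x i) / Q) \<le> (\<Sum>i\<in>I. c i * (x i * ln (x i / Q)))"
proof -
  define s where "s = (\<Sum>i\<in>I. c i * x i)"
  have "0 \<le> s"
    unfolding s_def using c x by (intro sum_nonneg mult_nonneg_nonneg) auto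
  show ?thesis
  proof (cases "s = 0")
    case True
    then have "\<forall>i\<in>I. c i * x i = 0"
      unfolding s_def using I c x by (subst (asm) sum_nonneg_eq_0_iff) auto
    then have "(\<Sum>i\<in>I. c i * (x i * ln (x i / Q))) = 0"
      by (intro sum.neutral) (auto simp: mult.assoc[symmetric])
    then show ?thesis
      using True by (simp add: s_def[symmetric])
  next
    case False
    with \<open>0 \<le> s\<close> have s: "0 < s" by simp
    have "(\<Sum>i\<in>I. c i * (x i * ln (s / Q) + (x i - s)))
        = ln (s / Q) * (\<Sum>i\<in>I. c i * x i) + (\<Sum>i\<in>I. c i * x i) - s * sum c I"
      by (simp add: algebra_simps sum.distrib sum_subtractf sum_distrib_left)
    then have "s * ln (s / Q) = (\<Sum>i\<in>I. c i * (x i * ln (s / Q) + (x i - s)))"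
      using c(2) by (simp add: s_def[symmetric])
    also have "\<dots> \<le> (\<Sum>i\<in>I. c i * (x i * ln (x i / Q)))"
      using c(1) x s Q by (intro sum_mono mult_left_mono mult_ln_div_tangent_le) auto
    finally show ?thesis
      by (simp add: s_def)
  qed
qed

lemma continuous_on_mult_ln: "continuous_on {0..} (\<lambda>x::real. x * ln x)"
  unfolding continuous_on_eq_continuous_within
proof
  fix x :: real
  assume "x \<in> {0..}"
  show "continuous (at x within {0..}) (\<lambda>x. x * ln x)"
  proof (cases "x = 0")
    case True
    have "((\<lambda>x::real. x * ln x) \<longlongrightarrow> 0) (at_right 0)"
      by real_asymp
    then show ?thesis
      using True by (simp add: continuous_within at_within_Ici_at_right)
  next
    case False
    with \<open>x \<in> {0..}\<close> show ?thesis
      by (intro continuous_intros) auto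
  qed
qed

lemma nn_integral_FTC_greaterThan:
  fixes F f :: "real \<Rightarrow> real"
  assumes deriv: "\<And>x. a < x \<Longrightarrow> (F has_real_derivative - f x) (at x)"
    and cont: "\<And>x. a < x \<Longrightarrow> isCont f x"
    and nonneg: "\<And>x. a < x \<Longrightarrow> 0 \<le> f x"
    and at_a: "(F \<longlongrightarrow> F a) (at_right a)"
    and at_top: "(F \<longlongrightarrow> L) at_top"
  shows "(\<integral>\<^sup>+x\<in>{a<..}. ennreal (f x) \<partial>lborel) = ennreal (F a - L)"
proof -
  have "\<And>x. ereal a < ereal x \<Longrightarrow> ((\<lambda>x. - F x) has_real_derivative f x) (at x)"
    using deriv DERIV_minus by fastforce
  moreover have "(((\<lambda>x. - F x) \<circ> real_of_ereal) \<longlongrightarrow> - F a) (at_right (ereal a))"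
    using at_a by (simp add: ereal_tendsto_simps tendsto_minus)
  moreover have "(((\<lambda>x. - F x) \<circ> real_of_ereal) \<longlongrightarrow> - L) (at_left \<infinity>)"
    using at_top by (simp add: ereal_tendsto_simps tendsto_minus)
  ultimately have int: "set_integrable lborel {a<..} f"
    and eq: "(LINT x:{a<..}|lborel. f x) = F a - L"
    using interval_integral_FTC_nonneg[of "ereal a" \<infinity> "\<lambda>x. - F x" f] cont nonneg
    by (auto simp: interval_integral_to_infinity_eq)
  have "(\<integral>\<^sup>+x\<in>{a<..}. ennreal (f x) \<partial>lborel) = (\<integral>\<^sup>+x. ennreal (indicator {a<..} x * f x) \<partial>lborel)"
    by (intro nn_integral_cong) (auto simp: indicator_def)
  also have "\<dots> = ennreal (LINT x:{a<..}|lborel. f x)"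
    using int nonneg unfolding set_lebesgue_integral_def set_integrable_def
    by (subst nn_integral_eq_integral) (auto simp: indicator_def)
  finally show ?thesis
    by (simp add: eq)
qed

lemma abs_summable_infsum_eq_suminf:
  fixes f :: "nat \<Rightarrow> real"
  assumes "summable (\<lambda>n. \<bar>f n\<bar>)"
  shows "f summable_on UNIV" "(\<Sum>\<^sub>\<infinity>n. f n) = suminf f"
proof -
  from assms have norm: "summable (\<lambda>n. norm (f n))"
    by simp
  show "f summable_on UNIV"
    by (rule norm_summable_imp_summable_on[OF norm])
  show "(\<Sum>\<^sub>\<infinity>n. f n) = suminf f"
    using norm by (intro infsumI norm_summable_imp_has_sum summable_sums summable_norm_cancel[OF norm])
qed

lemma rel_entropy_eq_suminf:
  assumes "\<And>x. 0 < P x \<Longrightarrow> Q x \<noteq> 0"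
    and "summable (\<lambda>x. \<bar>P x * ln (P x / Q x)\<bar>)"
  shows "rel_entropy P Q = ereal (\<Sum>x. P x * ln (P x / Q x))"
proof -
  have "(\<lambda>x. if P x = 0 then 0 else P x * ln (P x / Q x)) = (\<lambda>x. P x * ln (P x / Q x))"
    by auto
  then show ?thesis
    using assms abs_summable_infsum_eq_suminf[OF assms(2)] by (auto simp: rel_entropy_def)
qed

definition shift_seq :: "nat \<Rightarrow> (nat \<Rightarrow> 'a::zero) \<Rightarrow> nat \<Rightarrow> 'a" where
  "shift_seq k f r = (if k \<le> r then f (r - k) else 0)"

lemma shift_seq_ge: "k \<le> r \<Longrightarrow> shift_seq k f r = f (r - k)"
  by (simp add: shift_seq_def)

lemma shift_seq_less: "r < k \<Longrightarrow> shift_seq k f r = 0"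
  by (simp add: shift_seq_def)

lemma shift_seq_diff:
  fixes f g :: "nat \<Rightarrow> 'a::group_add"
  shows "shift_seq k (\<lambda>j. f j - g j) r = shift_seq k f r - shift_seq k g r"
  by (simp add: shift_seq_def)

lemma shift_seq_shift_seq: "shift_seq j (shift_seq k f) = shift_seq (j + k) f"
  by (auto simp: fun_eq_iff shift_seq_def)

lemma shift_seq_sums:
  fixes f :: "nat \<Rightarrow> 'a::real_normed_vector"
  assumes "f sums s"
  shows "shift_seq k f sums s"
proof -
  have "(\<lambda>i. shift_seq k f (i + k)) sums s"
    using assms by (simp add: shift_seq_def)
  then show ?thesis
    by (subst (asm) sums_zero_iff_shift) (auto simp: shift_seq_def)
qed

lemma summable_shift_seq:
  fixes f :: "nat \<Rightarrow> 'a::real_normed_vector"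
  shows "summable f \<Longrightarrow> summable (shift_seq k f)"
  using shift_seq_sums by (meson summable_def)

text \<open>Unlike \<open>Po\<close>, the weights are defined for every real \<open>t\<close>, so that derivatives
  in \<open>t\<close> are two-sided.\<close>

definition poisson_weight :: "real \<Rightarrow> nat \<Rightarrow> real" where
  "poisson_weight t j = exp (- t) * t ^ j / fact j"

lemma pmf_Po: "0 \<le> t \<Longrightarrow> pmf (Po t) j = poisson_weight t j"
  by (cases "t = 0") (auto simp: Po_def poisson_weight_def indicator_def)

lemma poisson_weight_nonneg: "0 \<le> t \<Longrightarrow> 0 \<le> poisson_weight t j"
  by (simp add: poisson_weight_def)

lemma poisson_weight_pos: "0 < t \<Longrightarrow> 0 < poisson_weight t j"
  by (simp add: poisson_weight_def)

lemma poisson_weight_sums: "poisson_weight t sums 1"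
proof -
  have "(\<lambda>j. t ^ j / fact j) sums exp t"
    using exp_converges[of t] by (simp add: divide_inverse mult.commute)
  from sums_mult[OF this, of "exp (- t)"] show ?thesis
    by (simp add: poisson_weight_def[abs_def] exp_minus field_simps)
qed

lemma poisson_weight_Suc: "real (Suc j) * poisson_weight t (Suc j) = t * poisson_weight t j"
  by (simp add: poisson_weight_def field_simps del: of_nat_Suc)

lemma poisson_weight_mean_sums: "(\<lambda>j. real j * poisson_weight t j) sums t"
proof -
  have "(\<lambda>j. real (Suc j) * poisson_weight t (Suc j)) sums t"
    using sums_mult[OF poisson_weight_sums, of t] by (simp only: poisson_weight_Suc) simp
  then show ?thesis
    by (subst (asm) sums_Suc_iff) simp
qed

lemma poisson_weight_affine_sums:
  "(\<lambda>j. poisson_weight t j * (c\<^sub>0 + c\<^sub>1 * real j)) sums (c\<^sub>0 + c\<^sub>1 * t)"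
proof -
  have "(\<lambda>j. c\<^sub>0 * poisson_weight t j + c\<^sub>1 * (real j * poisson_weight t j)) sums (c\<^sub>0 * 1 + c\<^sub>1 * t)"
    by (intro sums_add sums_mult poisson_weight_sums poisson_weight_mean_sums)
  then show ?thesis
    by (simp add: algebra_simps)
qed

lemma poisson_weight_has_derivative:
  "((\<lambda>t. poisson_weight t j) has_real_derivative
      shift_seq 1 (poisson_weight t) j - poisson_weight t j) (at t)"
proof (cases j)
  case 0
  then show ?thesis
    by (auto simp: poisson_weight_def shift_seq_def intro!: derivative_eq_intros)
next
  case (Suc i)
  have "((\<lambda>t. exp (- t) * t ^ Suc i / fact (Suc i)) has_real_derivative
      (exp (- t) * (real (Suc i) * t ^ i) - exp (- t) * t ^ Suc i) / fact (Suc i)) (at t)"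
    by (rule derivative_eq_intros refl | simp)+
  moreover have "real (Suc i) * (exp (- t) * t ^ i) / fact (Suc i) = exp (- t) * t ^ i / fact i"
    by (simp del: of_nat_Suc)
  ultimately show ?thesis
    by (simp add: Suc poisson_weight_def shift_seq_def diff_divide_distrib mult.left_commute)
qed

lemma ln_poisson_weight:
  "0 < t \<Longrightarrow> ln (poisson_weight t j) = - t + real j * ln t - ln (fact j)"
  by (simp add: poisson_weight_def ln_div ln_mult ln_realpow)

lemma abs_ln_poisson_weight_le:
  assumes "0 < t" "\<bar>ln t\<bar> \<le> L"
  shows "\<bar>ln (poisson_weight t j)\<bar> \<le> t + real j * L + real j * real j"
proof -
  have "\<bar>real j * ln t\<bar> \<le> real j * L"
    using assms by (simp add: abs_mult mult_left_mono)
  moreover have "0 \<le> ln (fact j :: real)"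
    by simp
  ultimately show ?thesis
    unfolding ln_poisson_weight[OF assms(1)] using ln_fact_le_square[of j] assms(1) by linarith
qed

lemma poisson_weight_le: "0 \<le> t \<Longrightarrow> t \<le> T \<Longrightarrow> poisson_weight t j \<le> T ^ j / fact j"
proof -
  assume "0 \<le> t" "t \<le> T"
  then have "exp (- t) * t ^ j \<le> 1 * T ^ j"
    by (intro mult_mono power_mono) auto
  then show ?thesis
    by (simp add: poisson_weight_def divide_right_mono)
qed

text \<open>The bound \<open>(j + k)! / j! \<le> (j + k)\<^sup>k\<close> followed by the tangent of \<open>ln\<close> at \<open>t + k\<close>
  makes the majorant affine in \<open>j\<close>, so that it can be averaged against \<open>Po(t)\<close>.\<close>

definition poisson_ratio_bound :: "real \<Rightarrow> real \<Rightarrow> nat \<Rightarrow> nat \<Rightarrow> real" where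
  "poisson_ratio_bound t s k j =
     s - t - real k * ln s + real k * ln (t + real k) + real k * real k / (t + real k) - real k
     + (ln (t / s) + real k / (t + real k)) * real j"

lemma ln_poisson_weight_ratio_le:
  assumes t: "0 < t" and s: "0 < s"
  shows "ln (poisson_weight t j / poisson_weight s (j + k)) \<le> poisson_ratio_bound t s k j"
proof -
  have fact_ratio:
    "ln (fact (j + k)) - ln (fact j) \<le> real k * (ln (t + real k) + real (j + k) / (t + real k) - 1)"
  proof (cases "k = 0")
    case False
    then have jk: "0 < real (j + k)" by simp
    have "ln (fact (j + k)) \<le> ln (fact j * real (j + k) ^ k)"
      using fact_add_le[of j k] jk by (subst ln_le_cancel_iff) auto
    also have "\<dots> = ln (fact j) + real k * ln (real (j + k))"
      using jk by (simp add: ln_mult ln_realpow)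
    finally have "ln (fact (j + k)) - ln (fact j) \<le> real k * ln (real (j + k))"
      by simp
    also have "ln (real (j + k)) \<le> ln (t + real k) + real (j + k) / (t + real k) - 1"
      using ln_le_minus_one[of "real (j + k) / (t + real k)"] jk t by (simp add: ln_div)
    then have "real k * ln (real (j + k)) \<le> real k * (ln (t + real k) + real (j + k) / (t + real k) - 1)"
      by (intro mult_left_mono) auto
    finally show ?thesis .
  qed simp
  have "ln (poisson_weight t j / poisson_weight s (j + k)) =
      s - t + real j * (ln t - ln s) - real k * ln s + (ln (fact (j + k)) - ln (fact j))"
    using t s poisson_weight_pos[OF t, of j] poisson_weight_pos[OF s, of "j + k"]
    by (simp add: ln_div ln_poisson_weight algebra_simps)
  also have "\<dots> \<le> s - t + real j * (ln t - ln s) - real k * ln s +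
      real k * (ln (t + real k) + real (j + k) / (t + real k) - 1)"
    using fact_ratio by simp
  also have "\<dots> = poisson_ratio_bound t s k j"
    using t s by (simp add: poisson_ratio_bound_def ln_div add_divide_distrib algebra_simps)
  finally show ?thesis .
qed

lemma poisson_ratio_bound_sums:
  assumes "0 < t"
  shows "(\<lambda>j. poisson_weight t j * poisson_ratio_bound t s k j) sums
           (s - t + t * ln (t / s) + real k * (ln (t + real k) - ln s))"
proof -
  have "real k * real k / (t + real k) + real k / (t + real k) * t = real k * (t + real k) / (t + real k)"
    by (simp add: add_divide_distrib algebra_simps)
  also have "\<dots> = real k"
    using assms by simp
  finally have "real k * real k / (t + real k) + real k / (t + real k) * t = real k" .
  then show ?thesis
    using poisson_weight_affine_sums[of t
        "s - t - real k * ln s + real k * ln (t + real k) + real k * real k / (t + real k) - real k"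
        "ln (t / s) + real k / (t + real k)"]
    by (simp add: poisson_ratio_bound_def algebra_simps)
qed

lemma pmf_add_poisson:
  assumes "0 \<le> t" "set_pmf P \<subseteq> {..N}"
  shows "pmf (add_poisson P t) r = (\<Sum>k\<le>N. pmf P k * shift_seq k (poisson_weight t) r)"
proof -
  have bind: "add_poisson P t = bind_pmf P (\<lambda>x. map_pmf ((+) x) (Po t))"
    unfolding add_poisson_def pair_pmf_def map_bind_pmf
    by (simp add: map_bind_pmf map_pmf_def[symmetric] o_def)
  have shift: "pmf (map_pmf ((+) x) (Po t)) r = shift_seq x (poisson_weight t) r" for x
  proof (cases "x \<le> r")
    case True
    then have "pmf (map_pmf ((+) x) (Po t)) r = pmf (map_pmf ((+) x) (Po t)) (x + (r - x))"
      by simp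
    also have "\<dots> = pmf (Po t) (r - x)"
      by (rule pmf_map_inj') (simp add: inj_on_def)
    finally show ?thesis
      using True assms by (simp add: shift_seq_def pmf_Po)
  qed (auto simp: shift_seq_def pmf_eq_0_set_pmf)
  have "pmf (add_poisson P t) r = measure_pmf.expectation P (\<lambda>x. shift_seq x (poisson_weight t) r)"
    by (simp add: bind pmf_bind shift)
  also have "\<dots> = (\<Sum>k\<le>N. pmf P k * shift_seq k (poisson_weight t) r)"
    using assms(2) by (subst integral_measure_pmf[of "{..N}"]) auto
  finally show ?thesis .
qed

lemma add_poisson_0: "add_poisson P 0 = P"
proof -
  have "add_poisson P 0 = map_pmf ((\<lambda>(x, z). x + z) \<circ> (\<lambda>x. (x, 0))) P"
    by (simp add: add_poisson_def Po_def pair_return_pmf2 pmf.map_comp)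
  also have "\<dots> = P"
    by (simp add: o_def)
  finally show ?thesis .
qed

lemma set_pmf_bernoulli_sum_pmf: "set_pmf (bernoulli_sum_pmf n p) \<subseteq> {..n}"
proof
  fix k
  assume "k \<in> set_pmf (bernoulli_sum_pmf n p)"
  then obtain b where k: "k = (\<Sum>i<n. of_bool (b i))"
    by (auto simp: bernoulli_sum_pmf_def)
  have "(\<Sum>i<n. of_bool (b i) :: nat) \<le> (\<Sum>i<n. 1)"
    by (intro sum_mono) auto
  then show "k \<in> {..n}"
    using k by simp
qed

lemma expectation_bernoulli_sum_pmf:
  assumes "\<And>i. i < n \<Longrightarrow> 0 \<le> p i \<and> p i \<le> 1"
  shows "measure_pmf.expectation (bernoulli_sum_pmf n p) real = (\<Sum>i<n. p i)"
proof -
  let ?B = "Pi_pmf {..<n} False (\<lambda>i. bernoulli_pmf (p i))"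
  have "measure_pmf.expectation (bernoulli_sum_pmf n p) real =
        measure_pmf.expectation ?B (\<lambda>b. \<Sum>i<n. of_bool (b i) :: real)"
    by (simp add: bernoulli_sum_pmf_def)
  also have "\<dots> = (\<Sum>i<n. measure_pmf.expectation ?B (\<lambda>b. of_bool (b i) :: real))"
    by (intro Bochner_Integration.integral_sum measure_pmf.integrable_const_bound[where B=1]) auto
  also have "\<dots> = (\<Sum>i<n. p i)"
  proof (intro sum.cong refl)
    fix i
    assume i: "i \<in> {..<n}"
    have "measure_pmf.expectation ?B (\<lambda>b. of_bool (b i) :: real) =
          measure_pmf.expectation (map_pmf (\<lambda>b. b i) ?B) of_bool"
      by simp
    also have "map_pmf (\<lambda>b. b i) ?B = bernoulli_pmf (p i)"
      using i by (subst Pi_pmf_component) auto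
    finally show "measure_pmf.expectation ?B (\<lambda>b. of_bool (b i) :: real) = p i"
      using assms[of i] i by simp
  qed
  finally show ?thesis .
qed

section \<open>Smoothing a finitely supported distribution by a Poisson variable\<close>

locale poisson_smoothing =
  fixes P :: "nat pmf" and n :: nat and lam :: real
  assumes support: "set_pmf P \<subseteq> {..n}"
    and mean: "measure_pmf.expectation P real = lam"
    and lam_pos: "0 < lam"
begin

lemma pmf_eq_0: "n < k \<Longrightarrow> pmf P k = 0"
  using support by (auto simp: pmf_eq_0_set_pmf)

lemma sum_pmf: "(\<Sum>k\<le>n. pmf P k) = 1"
  using support by (intro sum_pmf_eq_1) auto

lemma sum_mean: "(\<Sum>k\<le>n. real k * pmf P k) = lam"
proof -
  have "measure_pmf.expectation P real = (\<Sum>k\<le>n. real k * pmf P k)"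
    using support by (intro integral_measure_pmf_real) auto
  then show ?thesis
    using mean by simp
qed

text \<open>The least atom \<open>m\<close> of \<open>P\<close> gives the lower bound \<open>P\<^sub>t(r) \<ge> P(m) Po(t)(r - m)\<close>, which
  controls \<open>ln P\<^sub>t(r)\<close>.\<close>

definition supp_min :: nat where
  "supp_min = Min (set_pmf P)"

lemma finite_set_pmf: "finite (set_pmf P)"
  using support finite_subset by blast

lemma supp_min_in_set_pmf: "supp_min \<in> set_pmf P"
  unfolding supp_min_def using finite_set_pmf set_pmf_not_empty by (rule Min_in)

lemma pmf_supp_min_pos: "0 < pmf P supp_min"
  using supp_min_in_set_pmf by (simp add: pmf_positive)

lemma pmf_less_supp_min: "k < supp_min \<Longrightarrow> pmf P k = 0"
  using Min_le[OF finite_set_pmf, of k] by (auto simp: supp_min_def pmf_eq_0_set_pmf)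

lemma supp_min_le: "supp_min \<le> n"
  using supp_min_in_set_pmf support by auto

definition Pt :: "real \<Rightarrow> nat \<Rightarrow> real" where
  "Pt t r = (\<Sum>k\<le>n. pmf P k * shift_seq k (poisson_weight t) r)"

lemma pmf_add_poisson_eq_Pt: "0 \<le> t \<Longrightarrow> pmf (add_poisson P t) r = Pt t r"
  unfolding Pt_def using support by (intro pmf_add_poisson)

lemma Pt_0: "Pt 0 r = pmf P r"
  using pmf_add_poisson_eq_Pt[of 0 r] by (simp add: add_poisson_0)

lemma Pt_nonneg: "0 \<le> t \<Longrightarrow> 0 \<le> Pt t r"
  unfolding Pt_def by (intro sum_nonneg) (auto simp: shift_seq_def poisson_weight_nonneg)

lemma Pt_lower:
  assumes "0 \<le> t" "supp_min \<le> r"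
  shows "pmf P supp_min * poisson_weight t (r - supp_min) \<le> Pt t r"
proof -
  have "pmf P supp_min * shift_seq supp_min (poisson_weight t) r \<le> Pt t r"
    unfolding Pt_def using supp_min_le assms(1)
    by (intro member_le_sum) (auto simp: shift_seq_def poisson_weight_nonneg)
  then show ?thesis
    using assms(2) by (simp add: shift_seq_def)
qed

lemma Pt_pos: "0 < t \<Longrightarrow> supp_min \<le> r \<Longrightarrow> 0 < Pt t r"
  using Pt_lower[of t r] pmf_supp_min_pos poisson_weight_pos[of t "r - supp_min"]
  by (smt (verit) mult_pos_pos)

lemma Pt_eq_0: "r < supp_min \<Longrightarrow> Pt t r = 0"
  unfolding Pt_def by (intro sum.neutral) (auto simp: shift_seq_def pmf_less_supp_min)

lemma supp_min_le_if_Pt_nonzero: "Pt t r \<noteq> 0 \<Longrightarrow> supp_min \<le> r"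
  using Pt_eq_0 by (meson not_le)

lemma Pt_sums: "Pt t sums 1"
proof -
  have "(\<lambda>r. \<Sum>k\<le>n. pmf P k * shift_seq k (poisson_weight t) r) sums (\<Sum>k\<le>n. pmf P k * 1)"
    by (intro sums_sum sums_mult shift_seq_sums poisson_weight_sums)
  then show ?thesis
    by (simp add: Pt_def[abs_def] sum_pmf)
qed

lemma Pt_mean_sums: "(\<lambda>r. real r * Pt t r) sums (lam + t)"
proof -
  have "(\<lambda>j. real (j + k) * poisson_weight t j) sums (t + real k * 1)" for k
    using sums_add[OF poisson_weight_mean_sums sums_mult[OF poisson_weight_sums, of "real k"]]
    by (simp add: algebra_simps)
  then have "(\<lambda>r. \<Sum>k\<le>n. pmf P k * shift_seq k (\<lambda>j. real (j + k) * poisson_weight t j) r)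
      sums (\<Sum>k\<le>n. pmf P k * (t + real k))"
    by (intro sums_sum sums_mult shift_seq_sums) simp
  moreover have "(\<Sum>k\<le>n. pmf P k * (t + real k)) = lam + t"
    using sum_pmf sum_mean
    by (simp add: algebra_simps sum.distrib sum_distrib_left[symmetric] mult.commute)
  moreover have "real r * Pt t r = (\<Sum>k\<le>n. pmf P k * shift_seq k (\<lambda>j. real (j + k) * poisson_weight t j) r)" for r
    unfolding Pt_def sum_distrib_left by (intro sum.cong) (auto simp: shift_seq_def)
  ultimately show ?thesis
    by simp
qed

lemma Pt_le_1: "0 \<le> t \<Longrightarrow> Pt t r \<le> 1"
proof -
  assume "0 \<le> t"
  then have "sum (Pt t) {r} \<le> suminf (Pt t)"
    using Pt_nonneg by (intro sum_le_suminf sums_summable[OF Pt_sums]) auto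
  then show ?thesis
    using sums_unique[OF Pt_sums] by simp
qed

lemma Pt_has_derivative:
  "((\<lambda>t. Pt t r) has_real_derivative shift_seq 1 (Pt t) r - Pt t r) (at t)"
proof -
  have "((\<lambda>t. shift_seq k (poisson_weight t) r) has_real_derivative
      shift_seq k (\<lambda>j. shift_seq 1 (poisson_weight t) j - poisson_weight t j) r) (at t)" for k
    using poisson_weight_has_derivative[of "r - k" t]
    by (cases "k \<le> r") (simp_all add: shift_seq_ge shift_seq_less)
  then have "((\<lambda>t. Pt t r) has_real_derivative
      (\<Sum>k\<le>n. pmf P k * shift_seq k (\<lambda>j. shift_seq 1 (poisson_weight t) j - poisson_weight t j) r)) (at t)"
    unfolding Pt_def by (intro DERIV_sum DERIV_cmult)
  moreover have "(\<Sum>k\<le>n. pmf P k * shift_seq k (\<lambda>j. shift_seq 1 (poisson_weight t) j - poisson_weight t j) r)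
      = shift_seq 1 (Pt t) r - Pt t r"
  proof -
    have "shift_seq 1 (Pt t) r = (\<Sum>k\<le>n. pmf P k * shift_seq 1 (shift_seq k (poisson_weight t)) r)"
      by (cases "1 \<le> r") (simp_all add: shift_seq_def Pt_def)
    also have "\<dots> = (\<Sum>k\<le>n. pmf P k * shift_seq k (shift_seq 1 (poisson_weight t)) r)"
      by (simp add: shift_seq_shift_seq add.commute)
    finally show ?thesis
      unfolding Pt_def by (simp add: shift_seq_diff right_diff_distrib sum_subtractf)
  qed
  ultimately show ?thesis
    by simp
qed

lemma isCont_Pt: "isCont (\<lambda>t. Pt t r) t"
  using DERIV_continuous[OF Pt_has_derivative] .

definition Qt :: "real \<Rightarrow> nat \<Rightarrow> real" where
  "Qt t r = poisson_weight (lam + t) r"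

lemma Qt_pos: "0 \<le> t \<Longrightarrow> 0 < Qt t r"
  unfolding Qt_def using lam_pos by (intro poisson_weight_pos) simp

lemma Qt_sums: "Qt t sums 1"
  unfolding Qt_def[abs_def] by (rule poisson_weight_sums)

lemma ln_Qt: "0 \<le> t \<Longrightarrow> ln (Qt t r) = - (lam + t) + real r * ln (lam + t) - ln (fact r)"
  unfolding Qt_def using lam_pos by (intro ln_poisson_weight) simp

lemma Qt_Suc: "0 \<le> t \<Longrightarrow> real (Suc r) * Qt t (Suc r) = (lam + t) * Qt t r"
  unfolding Qt_def by (rule poisson_weight_Suc)

lemma isCont_Qt: "isCont (\<lambda>t. Qt t r) t"
  unfolding Qt_def poisson_weight_def by (intro continuous_intros) simp

definition Pt_tilde :: "real \<Rightarrow> nat \<Rightarrow> real" where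
  "Pt_tilde t r = real (r + 1) * Pt t (r + 1) / (lam + t)"

lemma Pt_tilde_sums: "0 \<le> t \<Longrightarrow> Pt_tilde t sums 1"
proof -
  assume "0 \<le> t"
  have "(\<lambda>r. real (Suc r) * Pt t (Suc r)) sums (lam + t)"
    using Pt_mean_sums[of t] by (subst sums_Suc_iff) simp
  then have "(\<lambda>r. real (Suc r) * Pt t (Suc r) / (lam + t)) sums ((lam + t) / (lam + t))"
    by (rule sums_divide)
  then show ?thesis
    using lam_pos \<open>0 \<le> t\<close> by (simp add: Pt_tilde_def[abs_def])
qed

definition log_ratio :: "real \<Rightarrow> nat \<Rightarrow> real" where
  "log_ratio t r = ln (Pt t r / Qt t r)"

definition D_Po_term :: "real \<Rightarrow> nat \<Rightarrow> real" where
  "D_Po_term t r = Pt t r * log_ratio t r"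

definition D_Po :: "real \<Rightarrow> real" where
  "D_Po t = (\<Sum>r. D_Po_term t r)"

definition D_tilde_term :: "real \<Rightarrow> nat \<Rightarrow> real" where
  "D_tilde_term t r = Pt t r * ln (Pt t r / Pt_tilde t r)"

definition D_tilde :: "real \<Rightarrow> real" where
  "D_tilde t = (\<Sum>r. D_tilde_term t r)"

lemma log_ratio_eq:
  assumes "0 < t" "supp_min \<le> r"
  shows "log_ratio t r = ln (Pt t r) + (lam + t) - real r * ln (lam + t) + ln (fact r)"
  using Pt_pos[OF assms] Qt_pos[of t r] assms by (simp add: log_ratio_def ln_div ln_Qt)

text \<open>Since the tilde transform fixes \<open>Po(\<lambda> + t)\<close>, \<open>ln (P\<^sub>t / P~\<^sub>t)\<close> is a difference of
  consecutive log-ratios.\<close>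

lemma D_tilde_term_eq:
  assumes t: "0 < t"
  shows "D_tilde_term t r = D_Po_term t r - Pt t r * log_ratio t (Suc r)"
proof (cases "supp_min \<le> r")
  case True
  have Pt: "0 < Pt t r" "0 < Pt t (Suc r)"
    using Pt_pos[OF t] True by auto
  have Qt: "0 < Qt t r" "0 < Qt t (Suc r)"
    using Qt_pos t by auto
  have s: "0 < lam + t"
    using t lam_pos by simp
  have "Pt_tilde t r * Qt t (Suc r) = Pt t (Suc r) * (real (Suc r) * Qt t (Suc r)) / (lam + t)"
    by (simp add: Pt_tilde_def)
  also have "\<dots> = Pt t (Suc r) * Qt t r"
    using t s by (simp only: Qt_Suc) simp
  finally have "Pt_tilde t r = Pt t (Suc r) * Qt t r / Qt t (Suc r)"
    using Qt by (simp add: eq_divide_eq)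
  then have "ln (Pt t r / Pt_tilde t r) = log_ratio t r - log_ratio t (Suc r)"
    using Pt Qt by (simp add: log_ratio_def ln_div ln_mult)
  then show ?thesis
    by (simp add: D_tilde_term_def D_Po_term_def right_diff_distrib)
qed (simp add: D_tilde_term_def D_Po_term_def Pt_eq_0)

section \<open>Domination of the series\<close>

text \<open>For \<open>t \<le> T\<close> the weights \<open>P\<^sub>t(r)\<close> and \<open>P\<^sub>t(r - 1)\<close> are dominated by shifted exponential
  series in \<open>T\<close>; the factor \<open>4\<^sup>r\<close> absorbs the quadratic growth in \<open>r\<close> of the log-ratios.\<close>

definition Pt_majorant :: "real \<Rightarrow> nat \<Rightarrow> real" where
  "Pt_majorant T r = (\<Sum>k\<le>n. shift_seq k (\<lambda>j. T ^ j / fact j) r)"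

definition dominant :: "real \<Rightarrow> nat \<Rightarrow> real" where
  "dominant T r = 4 ^ r * (Pt_majorant T r + shift_seq 1 (Pt_majorant T) r)"

lemma Pt_majorant_nonneg: "0 \<le> T \<Longrightarrow> 0 \<le> Pt_majorant T r"
  unfolding Pt_majorant_def by (intro sum_nonneg) (auto simp: shift_seq_def)

lemma dominant_nonneg: "0 \<le> T \<Longrightarrow> 0 \<le> dominant T r"
  by (simp add: dominant_def shift_seq_def Pt_majorant_nonneg)

lemma Pt_le_majorant:
  assumes "0 \<le> t" "t \<le> T"
  shows "Pt t r \<le> Pt_majorant T r"
  unfolding Pt_def Pt_majorant_def
proof (intro sum_mono)
  fix k
  have "pmf P k * shift_seq k (poisson_weight t) r \<le> 1 * shift_seq k (\<lambda>j. T ^ j / fact j) r"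
    using assms by (intro mult_mono pmf_le_1) (auto simp: shift_seq_def poisson_weight_le poisson_weight_nonneg)
  then show "pmf P k * shift_seq k (poisson_weight t) r \<le> shift_seq k (\<lambda>j. T ^ j / fact j) r"
    by simp
qed

lemma four_power_Pt_le_dominant:
  "0 \<le> t \<Longrightarrow> t \<le> T \<Longrightarrow> 4 ^ r * Pt t r \<le> dominant T r"
  using Pt_le_majorant[of t T r] Pt_majorant_nonneg[of T "r - 1"]
  by (simp add: dominant_def shift_seq_def)

lemma four_power_shift_Pt_le_dominant:
  "0 \<le> t \<Longrightarrow> t \<le> T \<Longrightarrow> 4 ^ r * shift_seq 1 (Pt t) r \<le> dominant T r"
  using Pt_le_majorant[of t T "r - 1"] Pt_majorant_nonneg[of T r]
  by (simp add: dominant_def shift_seq_def)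

lemma summable_four_power_majorant: "summable (\<lambda>r. 4 ^ r * Pt_majorant T r)"
proof -
  have "4 ^ r * Pt_majorant T r =
      (\<Sum>k\<le>n. shift_seq k (\<lambda>j. 4 ^ k * (inverse (fact j) * (4 * T) ^ j)) r)" for r
    unfolding Pt_majorant_def sum_distrib_left
  proof (intro sum.cong refl)
    fix k
    show "4 ^ r * shift_seq k (\<lambda>j. T ^ j / fact j) r =
        shift_seq k (\<lambda>j. 4 ^ k * (inverse (fact j) * (4 * T) ^ j)) r"
    proof (cases "k \<le> r")
      case True
      then have "(4::real) ^ r = 4 ^ k * 4 ^ (r - k)"
        by (simp add: power_add[symmetric])
      then show ?thesis
        using True by (simp add: shift_seq_def power_mult_distrib divide_inverse)
    qed (simp add: shift_seq_def)
  qed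
  then show ?thesis
    by (simp only:) (intro summable_sum summable_shift_seq summable_mult summable_exp)
qed

lemma summable_dominant: "summable (dominant T)"
proof -
  have "(\<lambda>r. 4 ^ r * shift_seq 1 (Pt_majorant T) r) = shift_seq 1 (\<lambda>r. 4 * (4 ^ r * Pt_majorant T r))"
    by (auto simp: fun_eq_iff shift_seq_def power_eq_if)
  then have "summable (\<lambda>r. 4 ^ r * shift_seq 1 (Pt_majorant T) r)"
    by (simp only:) (intro summable_shift_seq summable_mult summable_four_power_majorant)
  then show ?thesis
    unfolding dominant_def[abs_def] distrib_left
    by (intro summable_add summable_four_power_majorant)
qed

lemma summable_abs_if_dominated:
  "(\<And>r. \<bar>f r\<bar> \<le> C * dominant T r) \<Longrightarrow> summable (\<lambda>r. \<bar>f r\<bar>)"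
  by (rule summable_comparison_test[where g = "\<lambda>r. C * dominant T r"])
     (auto intro: summable_mult summable_dominant)

lemma summable_if_dominated:
  "(\<And>r. \<bar>f r\<bar> \<le> C * dominant T r) \<Longrightarrow> summable f"
  using summable_abs_if_dominated summable_rabs_cancel by blast

lemma abs_ln_Pt_le:
  assumes "0 < t" "supp_min \<le> r"
  shows "\<bar>ln (Pt t r)\<bar> \<le> \<bar>ln (pmf P supp_min)\<bar> + t + real r * \<bar>ln t\<bar> + real r * real r"
proof -
  define j where "j = r - supp_min"
  have w: "0 < poisson_weight t j"
    using assms poisson_weight_pos by simp
  have "ln (pmf P supp_min * poisson_weight t j) \<le> ln (Pt t r)"
    using Pt_lower[of t r] assms pmf_supp_min_pos w Pt_pos unfolding j_def
    by (subst ln_le_cancel_iff) auto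
  moreover have "ln (pmf P supp_min * poisson_weight t j) = ln (pmf P supp_min) + ln (poisson_weight t j)"
    using pmf_supp_min_pos w by (simp add: ln_mult)
  moreover have "\<bar>ln (poisson_weight t j)\<bar> \<le> t + real j * \<bar>ln t\<bar> + real j * real j"
    using assms by (intro abs_ln_poisson_weight_le) auto
  moreover have "real j * \<bar>ln t\<bar> + real j * real j \<le> real r * \<bar>ln t\<bar> + real r * real r"
    unfolding j_def by (intro add_mono mult_mono) auto
  moreover have "ln (Pt t r) \<le> 0"
    using Pt_pos[OF assms] Pt_le_1[of t r] assms by simp
  ultimately show ?thesis
    by linarith
qed

definition log_ratio_const :: "real \<Rightarrow> real \<Rightarrow> real" where
  "log_ratio_const e T = \<bar>ln (pmf P supp_min)\<bar> + 2 * T + lam + 2 * (\<bar>ln e\<bar> + \<bar>ln (lam + T)\<bar>) + 2"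

lemma log_ratio_const_nonneg: "0 \<le> T \<Longrightarrow> 0 \<le> log_ratio_const e T"
  using lam_pos by (simp add: log_ratio_const_def)

lemma abs_log_ratio_le:
  assumes e: "0 < e" "e \<le> t" "t \<le> T" and r: "supp_min \<le> r"
  shows "\<bar>log_ratio t r\<bar> \<le> log_ratio_const e T * 4 ^ r"
proof -
  define L where "L = \<bar>ln e\<bar> + \<bar>ln (lam + T)\<bar>"
  have t: "0 < t" "0 < lam + t"
    using e lam_pos by auto
  have "ln e \<le> ln t" "ln t \<le> ln (lam + T)" "ln e \<le> ln (lam + t)" "ln (lam + t) \<le> ln (lam + T)"
    using e lam_pos by auto
  then have L: "\<bar>ln t\<bar> \<le> L" "\<bar>ln (lam + t)\<bar> \<le> L"
    unfolding L_def by linarith+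
  have "real r * \<bar>ln t\<bar> \<le> real r * L"
    using L by (intro mult_left_mono) auto
  then have "\<bar>ln (Pt t r)\<bar> \<le> \<bar>ln (pmf P supp_min)\<bar> + T + real r * L + real r * real r"
    using abs_ln_Pt_le[OF t(1) r] e by linarith
  moreover have "\<bar>ln (Qt t r)\<bar> \<le> lam + T + real r * L + real r * real r"
    using abs_ln_poisson_weight_le[OF t(2) L(2), of r] e by (simp add: Qt_def)
  moreover have "log_ratio t r = ln (Pt t r) - ln (Qt t r)"
    using Pt_pos[OF t(1) r] Qt_pos[of t r] t by (simp add: log_ratio_def ln_div)
  then have "\<bar>log_ratio t r\<bar> \<le> \<bar>ln (Pt t r)\<bar> + \<bar>ln (Qt t r)\<bar>"
    by (simp add: abs_triangle_ineq4)
  ultimately have "\<bar>log_ratio t r\<bar> \<le>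
      (\<bar>ln (pmf P supp_min)\<bar> + 2 * T + lam) + 2 * (real r * L) + 2 * (real r * real r)"
    by linarith
  also have "\<dots> \<le> log_ratio_const e T * 4 ^ r"
    using quadratic_le_four_power[of "\<bar>ln (pmf P supp_min)\<bar> + 2 * T + lam" "2 * L" 2 r] e lam_pos
    by (simp add: log_ratio_const_def L_def algebra_simps)
  finally show ?thesis .
qed

lemma abs_mult_log_ratio_le:
  assumes "0 < e" "e \<le> t" "t \<le> T" "0 \<le> x" "x \<noteq> 0 \<Longrightarrow> supp_min \<le> r"
  shows "\<bar>x * log_ratio t r\<bar> \<le> log_ratio_const e T * (4 ^ r * x)"
proof (cases "x = 0")
  case False
  then have "x * \<bar>log_ratio t r\<bar> \<le> x * (log_ratio_const e T * 4 ^ r)"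
    using assms by (intro mult_left_mono abs_log_ratio_le) auto
  then show ?thesis
    using assms by (simp add: abs_mult algebra_simps)
qed simp

lemma abs_D_Po_term_le:
  assumes "0 < e" "e \<le> t" "t \<le> T"
  shows "\<bar>D_Po_term t r\<bar> \<le> log_ratio_const e T * dominant T r"
proof -
  have "\<bar>D_Po_term t r\<bar> \<le> log_ratio_const e T * (4 ^ r * Pt t r)"
    unfolding D_Po_term_def using assms Pt_nonneg supp_min_le_if_Pt_nonzero
    by (intro abs_mult_log_ratio_le) auto
  also have "\<dots> \<le> log_ratio_const e T * dominant T r"
    using assms by (intro mult_left_mono four_power_Pt_le_dominant log_ratio_const_nonneg) auto
  finally show ?thesis .
qed

lemma abs_Pt_mult_log_ratio_Suc_le:
  assumes "0 < e" "e \<le> t" "t \<le> T"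
  shows "\<bar>Pt t r * log_ratio t (Suc r)\<bar> \<le> 4 * log_ratio_const e T * dominant T r"
proof -
  have "\<bar>Pt t r * log_ratio t (Suc r)\<bar> \<le> log_ratio_const e T * (4 ^ Suc r * Pt t r)"
    using assms Pt_nonneg supp_min_le_if_Pt_nonzero[of t r]
    by (intro abs_mult_log_ratio_le) auto
  also have "\<dots> = 4 * log_ratio_const e T * (4 ^ r * Pt t r)"
    by simp
  also have "\<dots> \<le> 4 * log_ratio_const e T * dominant T r"
    using assms by (intro mult_left_mono four_power_Pt_le_dominant) (auto simp: log_ratio_const_nonneg)
  finally show ?thesis .
qed

lemma abs_shift_Pt_mult_log_ratio_le:
  assumes "0 < e" "e \<le> t" "t \<le> T"
  shows "\<bar>shift_seq 1 (Pt t) r * log_ratio t r\<bar> \<le> log_ratio_const e T * dominant T r"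
proof -
  have "\<bar>shift_seq 1 (Pt t) r * log_ratio t r\<bar> \<le> log_ratio_const e T * (4 ^ r * shift_seq 1 (Pt t) r)"
    using assms Pt_nonneg supp_min_le_if_Pt_nonzero[of t "r - 1"]
    by (intro abs_mult_log_ratio_le) (auto simp: shift_seq_def split: if_splits)
  also have "\<dots> \<le> log_ratio_const e T * dominant T r"
    using assms by (intro mult_left_mono four_power_shift_Pt_le_dominant log_ratio_const_nonneg) auto
  finally show ?thesis .
qed

section \<open>The derivative of the relative entropy\<close>

definition D_Po_term_deriv :: "real \<Rightarrow> nat \<Rightarrow> real" where
  "D_Po_term_deriv t r = (shift_seq 1 (Pt t) r - Pt t r) * log_ratio t r
     + shift_seq 1 (Pt t) r - real r * Pt t r / (lam + t)"

lemma D_Po_term_has_derivative: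
  assumes t: "0 < t"
  shows "((\<lambda>t. D_Po_term t r) has_real_derivative D_Po_term_deriv t r) (at t)"
proof (cases "supp_min \<le> r")
  case True
  define f where "f = (\<lambda>t. Pt t r * (ln (Pt t r) + (lam + t) - real r * ln (lam + t) + ln (fact r)))"
  have Pt: "0 < Pt t r" and s: "0 < lam + t"
    using Pt_pos[OF t True] t lam_pos by auto
  have "((\<lambda>t. ln (Pt t r) + (lam + t) - real r * ln (lam + t) + ln (fact r)) has_real_derivative
      (shift_seq 1 (Pt t) r - Pt t r) / Pt t r + 1 - real r / (lam + t)) (at t)"
    using Pt s by (auto intro!: derivative_eq_intros Pt_has_derivative)
  from DERIV_mult[OF Pt_has_derivative[of r t] this]
  have "(f has_real_derivative (shift_seq 1 (Pt t) r - Pt t r) * log_ratio t r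
      + ((shift_seq 1 (Pt t) r - Pt t r) / Pt t r + 1 - real r / (lam + t)) * Pt t r) (at t)"
    by (simp add: f_def log_ratio_eq[OF t True])
  moreover have "(shift_seq 1 (Pt t) r - Pt t r) * log_ratio t r
      + ((shift_seq 1 (Pt t) r - Pt t r) / Pt t r + 1 - real r / (lam + t)) * Pt t r = D_Po_term_deriv t r"
  proof -
    have "(b - a) * u + ((b - a) / a + 1 - c / s) * a = (b - a) * u + b - c * a / s"
      if "a \<noteq> 0" "s \<noteq> 0" for a b c s u :: real
      using that by (simp add: field_simps)
    then show ?thesis
      using Pt s by (simp add: D_Po_term_deriv_def)
  qed
  ultimately have "(f has_real_derivative D_Po_term_deriv t r) (at t)"
    by simp
  then show ?thesis
  proof (rule has_field_derivative_transform_within_open)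
    show "f x = D_Po_term x r" if "x \<in> {0<..}" for x
      using that True by (simp add: f_def D_Po_term_def log_ratio_eq)
  qed (use t in auto)
next
  case False
  then have "D_Po_term x r = 0" "D_Po_term_deriv t r = 0" for x
    by (auto simp: D_Po_term_def D_Po_term_deriv_def shift_seq_def Pt_eq_0)
  then show ?thesis
    by simp
qed

lemma abs_D_Po_term_deriv_le:
  assumes e: "0 < e" "e \<le> t" "t \<le> T"
  shows "\<bar>D_Po_term_deriv t r\<bar> \<le> (2 * log_ratio_const e T + 1 + 1 / lam) * dominant T r"
proof -
  have t: "0 \<le> t" "0 \<le> T"
    using e by auto
  have "0 \<le> shift_seq 1 (Pt t) r"
    using Pt_nonneg[OF t(1)] by (simp add: shift_seq_def)
  then have "shift_seq 1 (Pt t) r \<le> 4 ^ r * shift_seq 1 (Pt t) r"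
    using mult_right_mono[OF one_le_power[of "4::real" r]] by simp
  also have "\<dots> \<le> dominant T r"
    using e by (intro four_power_shift_Pt_le_dominant) auto
  finally have shift: "shift_seq 1 (Pt t) r \<le> dominant T r" .
  have "real r * Pt t r / (lam + t) \<le> 4 ^ r * Pt t r / lam"
    using Pt_nonneg[OF t(1), of r] lam_pos t quadratic_le_four_power[of 0 1 0 r]
    by (intro frac_le mult_right_mono) auto
  also have "\<dots> \<le> dominant T r / lam"
    using e lam_pos by (intro divide_right_mono four_power_Pt_le_dominant) auto
  finally have mean: "real r * Pt t r / (lam + t) \<le> dominant T r / lam" .
  have "0 \<le> shift_seq 1 (Pt t) r" "0 \<le> real r * Pt t r / (lam + t)"
    using Pt_nonneg[OF t(1)] lam_pos t by (auto simp: shift_seq_def)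
  moreover have "\<bar>(b - a) * u + b - c\<bar> \<le> \<bar>b * u\<bar> + \<bar>a * u\<bar> + b + c"
    if "0 \<le> b" "0 \<le> c" for a b c u :: real
    using that unfolding left_diff_distrib by linarith
  ultimately have "\<bar>D_Po_term_deriv t r\<bar> \<le> \<bar>shift_seq 1 (Pt t) r * log_ratio t r\<bar> + \<bar>D_Po_term t r\<bar>
      + shift_seq 1 (Pt t) r + real r * Pt t r / (lam + t)"
    unfolding D_Po_term_deriv_def D_Po_term_def by blast
  also have "\<dots> \<le> (2 * log_ratio_const e T + 1 + 1 / lam) * dominant T r"
    using abs_shift_Pt_mult_log_ratio_le[OF e, of r] abs_D_Po_term_le[OF e, of r] shift mean
    by (simp add: algebra_simps)
  finally show ?thesis .
qed

text \<open>After reindexing, the series of \<open>P\<^sub>t(r - 1) \<cdot> log_ratio t r\<close> combines with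
  \<open>D_tilde_term_eq\<close>, and the two remaining series both sum to \<open>1\<close>.\<close>

lemma D_Po_term_deriv_sums:
  assumes t: "0 < t"
  shows "(\<lambda>r. D_Po_term_deriv t r) sums (- D_tilde t)"
proof -
  have e: "0 < t" "t \<le> t" "t \<le> t"
    using t by auto
  define X where "X = (\<Sum>r. Pt t r * log_ratio t (Suc r))"
  have X: "(\<lambda>r. Pt t r * log_ratio t (Suc r)) sums X"
    unfolding X_def by (intro summable_sums summable_if_dominated[OF abs_Pt_mult_log_ratio_Suc_le[OF e]])
  then have "(\<lambda>r. shift_seq 1 (Pt t) (Suc r) * log_ratio t (Suc r)) sums X"
    by (simp add: shift_seq_def)
  then have shift_X: "(\<lambda>r. shift_seq 1 (Pt t) r * log_ratio t r) sums X"
    by (subst (asm) sums_Suc_iff) (simp add: shift_seq_def)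
  have D: "D_Po_term t sums D_Po t"
    unfolding D_Po_def by (intro summable_sums summable_if_dominated[OF abs_D_Po_term_le[OF e]])
  have mean: "(\<lambda>r. real r * Pt t r / (lam + t)) sums 1"
    using sums_divide[OF Pt_mean_sums[of t], of "lam + t"] lam_pos t by simp
  have shift: "shift_seq 1 (Pt t) sums 1"
    by (intro shift_seq_sums Pt_sums)
  have "(\<lambda>r. shift_seq 1 (Pt t) r * log_ratio t r - D_Po_term t r + shift_seq 1 (Pt t) r
      - real r * Pt t r / (lam + t)) sums (X - D_Po t + 1 - 1)"
    by (intro sums_diff sums_add shift_X D shift mean)
  moreover have "(\<lambda>r. D_tilde_term t r) sums (D_Po t - X)"
    using sums_diff[OF D X] by (simp add: D_tilde_term_eq[OF t])
  ultimately show ?thesis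
    by (simp add: D_Po_term_deriv_def D_Po_term_def D_tilde_def sums_iff algebra_simps)
qed

lemma uniform_limit_D_Po_term_deriv:
  assumes "0 < a"
  shows "uniform_limit {a..b} (\<lambda>N x. \<Sum>r<N. D_Po_term_deriv x r) (\<lambda>x. \<Sum>r. D_Po_term_deriv x r) sequentially"
proof (rule Weierstrass_m_test)
  show "norm (D_Po_term_deriv x r) \<le> (2 * log_ratio_const a b + 1 + 1 / lam) * dominant b r"
    if "x \<in> {a..b}" for x r
    using that assms abs_D_Po_term_deriv_le[of a x b r] by simp
qed (intro summable_mult summable_dominant)

lemma D_Po_has_derivative:
  assumes t: "0 < t"
  shows "(D_Po has_real_derivative - D_tilde t) (at t)"
proof -
  have "((\<lambda>x. \<Sum>r. D_Po_term x r) has_real_derivative (\<Sum>r. D_Po_term_deriv t r)) (at t)"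
  proof (rule has_field_derivative_series'(2)[of "{t / 2..t + 1}" "\<lambda>r x. D_Po_term x r"
        "\<lambda>r x. D_Po_term_deriv x r" t])
    have "0 < t / 2"
      using t by simp
    then have "uniform_limit {t / 2..t + 1} (\<lambda>N x. \<Sum>r<N. D_Po_term_deriv x r)
        (\<lambda>x. \<Sum>r. D_Po_term_deriv x r) sequentially"
      by (rule uniform_limit_D_Po_term_deriv)
    then show "uniformly_convergent_on {t / 2..t + 1} (\<lambda>N x. \<Sum>r<N. D_Po_term_deriv x r)"
      by (rule uniformly_convergentI)
    show "((\<lambda>x. D_Po_term x r) has_real_derivative D_Po_term_deriv x r) (at x within {t / 2..t + 1})"
      if "x \<in> {t / 2..t + 1}" for r x
      using that t by (intro has_field_derivative_at_within[OF D_Po_term_has_derivative]) auto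
    show "summable (\<lambda>r. D_Po_term t r)"
      using t by (intro summable_if_dominated[of _ "log_ratio_const t t" t] abs_D_Po_term_le) auto
    show "t \<in> interior {t / 2..t + 1}" "t \<in> {t / 2..t + 1}"
      using t by simp_all
  qed simp
  then show ?thesis
    using D_Po_term_deriv_sums[OF t] by (simp add: D_Po_def[abs_def] sums_iff)
qed

lemma isCont_log_ratio:
  assumes "0 < t" "supp_min \<le> r"
  shows "isCont (\<lambda>t. log_ratio t r) t"
proof -
  have "isCont (\<lambda>t. Pt t r / Qt t r) t"
    using Qt_pos[of t r] assms by (intro isCont_divide isCont_Pt isCont_Qt) auto
  then show ?thesis
    unfolding log_ratio_def by (rule isCont_ln') (use Pt_pos[OF assms] Qt_pos[of t r] assms in simp)
qed

lemma isCont_D_Po_term_deriv: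
  assumes "0 < t"
  shows "isCont (\<lambda>t. D_Po_term_deriv t r) t"
proof (cases "supp_min \<le> r")
  case True
  have shift: "isCont (\<lambda>t. shift_seq 1 (Pt t) r) t"
    by (cases "1 \<le> r") (simp_all add: shift_seq_def isCont_Pt)
  have "isCont (\<lambda>t. real r * Pt t r / (lam + t)) t"
    using assms lam_pos by (intro isCont_divide isCont_mult isCont_add isCont_Pt continuous_ident) auto
  then show ?thesis
    unfolding D_Po_term_deriv_def using assms True
    by (intro isCont_diff isCont_add isCont_mult shift isCont_Pt isCont_log_ratio)
next
  case False
  then have "(\<lambda>t. D_Po_term_deriv t r) = (\<lambda>t. 0)"
    by (auto simp: fun_eq_iff D_Po_term_deriv_def shift_seq_def Pt_eq_0)
  then show ?thesis
    by simp
qed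

lemma isCont_D_tilde:
  assumes t: "0 < t"
  shows "isCont D_tilde t"
proof -
  define S where "S = {t / 2..t + 1}"
  have "continuous_on S (\<lambda>x. \<Sum>r. D_Po_term_deriv x r)"
  proof (rule uniform_limit_theorem)
    show "uniform_limit S (\<lambda>N x. \<Sum>r<N. D_Po_term_deriv x r) (\<lambda>x. \<Sum>r. D_Po_term_deriv x r) sequentially"
      unfolding S_def using t by (intro uniform_limit_D_Po_term_deriv) simp
    have "continuous_on S (\<lambda>x. D_Po_term_deriv x r)" for r
      using t by (intro continuous_at_imp_continuous_on ballI isCont_D_Po_term_deriv) (simp add: S_def)
    then show "\<forall>\<^sub>F N in sequentially. continuous_on S (\<lambda>x. \<Sum>r<N. D_Po_term_deriv x r)"
      by (intro always_eventually allI continuous_on_sum) simp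
  qed simp
  moreover have "(\<Sum>r. D_Po_term_deriv x r) = - D_tilde x" if "x \<in> S" for x
    using that t D_Po_term_deriv_sums[of x] by (simp add: S_def sums_iff)
  ultimately have "continuous_on S (\<lambda>x. - D_tilde x)"
    using continuous_on_cong[of S S "\<lambda>x. \<Sum>r. D_Po_term_deriv x r" "\<lambda>x. - D_tilde x"] by simp
  then have "continuous_on S (\<lambda>x. - (- D_tilde x))"
    by (rule continuous_on_minus)
  moreover have "t \<in> interior S"
    using t by (simp add: S_def)
  ultimately show ?thesis
    by (simp add: continuous_on_interior)
qed

lemma summable_abs_D_tilde_term:
  assumes t: "0 < t"
  shows "summable (\<lambda>r. \<bar>D_tilde_term t r\<bar>)"
proof (rule summable_abs_if_dominated)
  fix r
  have "\<bar>D_tilde_term t r\<bar> \<le> \<bar>D_Po_term t r\<bar> + \<bar>Pt t r * log_ratio t (Suc r)\<bar>"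
    using D_tilde_term_eq[OF t, of r] by simp
  also have "\<dots> \<le> log_ratio_const t t * dominant t r + 4 * log_ratio_const t t * dominant t r"
    using t by (intro add_mono abs_D_Po_term_le abs_Pt_mult_log_ratio_Suc_le) auto
  finally show "\<bar>D_tilde_term t r\<bar> \<le> (5 * log_ratio_const t t) * dominant t r"
    by (simp add: algebra_simps)
qed

lemma D_tilde_nonneg:
  assumes t: "0 < t"
  shows "0 \<le> D_tilde t"
proof -
  have le: "Pt t r - Pt_tilde t r \<le> D_tilde_term t r" for r
  proof (cases "supp_min \<le> r")
    case True
    then have "0 < Pt_tilde t r"
      using Pt_pos[OF t, of "r + 1"] t lam_pos by (simp add: Pt_tilde_def)
    then show ?thesis
      unfolding D_tilde_term_def using Pt_nonneg t by (intro diff_le_mult_ln_div) auto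
  next
    case False
    then show ?thesis
      using Pt_nonneg[of t "r + 1"] t lam_pos by (simp add: D_tilde_term_def Pt_tilde_def Pt_eq_0)
  qed
  have "(\<lambda>r. Pt t r - Pt_tilde t r) sums (1 - 1)"
    using t by (intro sums_diff Pt_sums Pt_tilde_sums) auto
  moreover have "D_tilde_term t sums D_tilde t"
    unfolding D_tilde_def using summable_rabs_cancel[OF summable_abs_D_tilde_term[OF t]]
    by (rule summable_sums)
  ultimately have "1 - 1 \<le> D_tilde t"
    by (rule sums_le[OF le])
  then show ?thesis
    by simp
qed

section \<open>Behaviour at zero and at infinity\<close>

lemma D_Po_term_eq: "0 \<le> t \<Longrightarrow> D_Po_term t r = Pt t r * ln (Pt t r) - Pt t r * ln (Qt t r)"
  using Pt_nonneg[of t r] Qt_pos[of t r]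
  by (cases "Pt t r = 0") (simp_all add: D_Po_term_def log_ratio_def ln_div right_diff_distrib)

lemma Pt_neg_ln_le_majorant:
  assumes t: "0 < t" "t \<le> 1" and r: "n < r"
  shows "Pt t r * - ln t \<le> Pt_majorant 1 r"
  unfolding Pt_def Pt_majorant_def sum_distrib_right
proof (intro sum_mono)
  fix k
  assume "k \<in> {..n}"
  with r have k: "k \<le> r" "0 < r - k"
    by auto
  have "poisson_weight t (r - k) * - ln t = exp (- t) * (t ^ (r - k) * - ln t) / fact (r - k)"
    by (simp add: poisson_weight_def)
  also have "\<dots> \<le> 1 * 1 / fact (r - k)"
    using t power_mult_neg_ln_le_1[OF t k(2)] mult_nonneg_nonneg[of "t ^ (r - k)" "- ln t"]
    by (intro divide_right_mono mult_mono) auto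
  finally have "poisson_weight t (r - k) * - ln t \<le> 1 / fact (r - k)"
    by simp
  moreover have "0 \<le> poisson_weight t (r - k) * - ln t"
    using t poisson_weight_nonneg[of t "r - k"] by (simp add: mult_nonneg_nonpos)
  ultimately have "pmf P k * (poisson_weight t (r - k) * - ln t) \<le> 1 * (1 / fact (r - k))"
    by (intro mult_mono pmf_le_1) auto
  then show "pmf P k * shift_seq k (poisson_weight t) r * - ln t \<le> shift_seq k (\<lambda>j. 1 ^ j / fact j) r"
    using k by (simp add: shift_seq_def mult.assoc)
qed

lemma abs_Pt_ln_Pt_le:
  assumes t: "0 < t" "t \<le> 1" and r: "n < r"
  shows "\<bar>Pt t r * ln (Pt t r)\<bar> \<le> (\<bar>ln (pmf P supp_min)\<bar> + 3) * dominant 1 r"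
proof -
  have m: "supp_min \<le> r"
    using r supp_min_le by simp
  have Pt: "0 \<le> Pt t r" "Pt t r \<le> Pt_majorant 1 r"
    using t by (auto intro: Pt_nonneg Pt_le_majorant)
  have lnt: "\<bar>ln t\<bar> = - ln t"
    using t by simp
  have "\<bar>Pt t r * ln (Pt t r)\<bar> = Pt t r * \<bar>ln (Pt t r)\<bar>"
    using Pt(1) by (simp add: abs_mult)
  also have "\<dots> \<le> Pt t r * (\<bar>ln (pmf P supp_min)\<bar> + 1 + real r * \<bar>ln t\<bar> + real r * real r)"
    using abs_ln_Pt_le[OF t(1) m] t Pt(1) by (intro mult_left_mono) auto
  also have "\<dots> = Pt t r * (\<bar>ln (pmf P supp_min)\<bar> + 1 + real r * real r) + real r * (Pt t r * - ln t)"
    by (simp add: lnt algebra_simps)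
  also have "\<dots> \<le> Pt_majorant 1 r * (\<bar>ln (pmf P supp_min)\<bar> + 1 + real r * real r) + real r * Pt_majorant 1 r"
    using Pt Pt_neg_ln_le_majorant[OF t r] by (intro add_mono mult_right_mono mult_left_mono) auto
  also have "\<dots> = Pt_majorant 1 r * ((\<bar>ln (pmf P supp_min)\<bar> + 1) + 1 * real r + 1 * (real r * real r))"
    by (simp add: algebra_simps)
  also have "\<dots> \<le> Pt_majorant 1 r * ((\<bar>ln (pmf P supp_min)\<bar> + 3) * 4 ^ r)"
    using quadratic_le_four_power[of "\<bar>ln (pmf P supp_min)\<bar> + 1" 1 1 r] Pt
    by (intro mult_left_mono) (auto simp: algebra_simps)
  also have "\<dots> \<le> (\<bar>ln (pmf P supp_min)\<bar> + 3) * dominant 1 r"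
    using Pt_majorant_nonneg[of 1 "r - 1"] by (simp add: dominant_def shift_seq_def algebra_simps)
  finally show ?thesis .
qed

lemma abs_ln_Qt_le:
  assumes t: "0 \<le> t" "t \<le> 1"
  shows "\<bar>ln (Qt t r)\<bar> \<le> (lam + \<bar>ln lam\<bar> + \<bar>ln (lam + 1)\<bar> + 2) * 4 ^ r"
proof -
  define L where "L = \<bar>ln lam\<bar> + \<bar>ln (lam + 1)\<bar>"
  have "ln lam \<le> ln (lam + t)" "ln (lam + t) \<le> ln (lam + 1)"
    using t lam_pos by auto
  then have "\<bar>ln (lam + t)\<bar> \<le> L"
    unfolding L_def by linarith
  then have "\<bar>ln (Qt t r)\<bar> \<le> (lam + t) + real r * L + real r * real r"
    unfolding Qt_def using lam_pos t by (intro abs_ln_poisson_weight_le) auto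
  also have "\<dots> \<le> (lam + 1) + L * real r + 1 * (real r * real r)"
    using t by (simp add: algebra_simps)
  also have "\<dots> \<le> (lam + \<bar>ln lam\<bar> + \<bar>ln (lam + 1)\<bar> + 2) * 4 ^ r"
    using quadratic_le_four_power[of "lam + 1" L 1 r] lam_pos by (simp add: L_def algebra_simps)
  finally show ?thesis .
qed

lemma abs_Pt_mult_ln_Qt_le:
  assumes t: "0 \<le> t" "t \<le> 1"
  shows "\<bar>Pt t r * ln (Qt t r)\<bar> \<le> (lam + \<bar>ln lam\<bar> + \<bar>ln (lam + 1)\<bar> + 2) * dominant 1 r"
proof -
  have "\<bar>Pt t r * ln (Qt t r)\<bar> \<le> Pt t r * ((lam + \<bar>ln lam\<bar> + \<bar>ln (lam + 1)\<bar> + 2) * 4 ^ r)"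
    using mult_left_mono[OF abs_ln_Qt_le[OF t, of r] Pt_nonneg[OF t(1), of r]] Pt_nonneg[OF t(1), of r]
    by (simp add: abs_mult)
  also have "\<dots> = (lam + \<bar>ln lam\<bar> + \<bar>ln (lam + 1)\<bar> + 2) * (4 ^ r * Pt t r)"
    by simp
  also have "\<dots> \<le> (lam + \<bar>ln lam\<bar> + \<bar>ln (lam + 1)\<bar> + 2) * dominant 1 r"
    using t lam_pos by (intro mult_left_mono four_power_Pt_le_dominant) auto
  finally show ?thesis .
qed

text \<open>A majorant uniform in \<open>t \<in> [0, 1]\<close>: for \<open>r > n\<close> every Poisson factor of \<open>P\<^sub>t(r)\<close> carries
  a positive power of \<open>t\<close>, which absorbs the singularity of \<open>ln t\<close> at \<open>0\<close>.\<close>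

definition D_Po_term_majorant :: "nat \<Rightarrow> real" where
  "D_Po_term_majorant r = (if r \<le> n then 1 else 0) + (\<bar>ln (pmf P supp_min)\<bar> + 3) * dominant 1 r
     + (lam + \<bar>ln lam\<bar> + \<bar>ln (lam + 1)\<bar> + 2) * dominant 1 r"

lemma summable_D_Po_term_majorant: "summable D_Po_term_majorant"
  unfolding D_Po_term_majorant_def[abs_def]
  by (intro summable_add summable_mult summable_dominant summable_finite[of "{..n}"]) auto

lemma abs_D_Po_term_le_majorant:
  assumes t: "0 \<le> t" "t \<le> 1"
  shows "\<bar>D_Po_term t r\<bar> \<le> D_Po_term_majorant r"
proof -
  have dom: "0 \<le> dominant 1 r"
    by (simp add: dominant_nonneg)
  have "\<bar>D_Po_term t r\<bar> \<le> \<bar>Pt t r * ln (Pt t r)\<bar> + \<bar>Pt t r * ln (Qt t r)\<bar>"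
    using D_Po_term_eq[OF t(1), of r] by (simp add: abs_triangle_ineq4)
  moreover have "0 \<le> (\<bar>ln (pmf P supp_min)\<bar> + 3) * dominant 1 r"
    using dom by simp
  moreover have "\<bar>Pt t r * ln (Pt t r)\<bar> \<le> (if r \<le> n then 1 else (\<bar>ln (pmf P supp_min)\<bar> + 3) * dominant 1 r)"
  proof (cases "r \<le> n")
    case True
    then show ?thesis
      using t by (simp add: abs_mult_ln_le_1 Pt_nonneg Pt_le_1)
  next
    case False
    show ?thesis
    proof (cases "t = 0")
      case True
      then show ?thesis
        using False dom by (simp add: Pt_0 pmf_eq_0)
    next
      case False
      with t \<open>\<not> r \<le> n\<close> show ?thesis
        by (simp add: abs_Pt_ln_Pt_le)
    qed
  qed
  moreover have "\<bar>Pt t r * ln (Qt t r)\<bar> \<le> (lam + \<bar>ln lam\<bar> + \<bar>ln (lam + 1)\<bar> + 2) * dominant 1 r"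
    using t by (rule abs_Pt_mult_ln_Qt_le)
  ultimately show ?thesis
    unfolding D_Po_term_majorant_def by (cases "r \<le> n") auto
qed

lemma continuous_on_D_Po_term: "continuous_on {0..1} (\<lambda>t. D_Po_term t r)"
proof -
  have "continuous_on {0..1} (\<lambda>t. Pt t r * ln (Pt t r))"
    using Pt_nonneg
    by (intro continuous_on_compose2[OF continuous_on_mult_ln, of _ "\<lambda>t. Pt t r"]
        continuous_at_imp_continuous_on ballI isCont_Pt) auto
  moreover have "continuous_on {0..1} (\<lambda>t. Pt t r * ln (Qt t r))"
  proof (intro continuous_at_imp_continuous_on ballI)
    fix t :: real
    assume "t \<in> {0..1}"
    then show "isCont (\<lambda>t. Pt t r * ln (Qt t r)) t"
      using Qt_pos[of t r] by (intro isCont_mult isCont_Pt isCont_ln' isCont_Qt) auto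
  qed
  ultimately have "continuous_on {0..1} (\<lambda>t. Pt t r * ln (Pt t r) - Pt t r * ln (Qt t r))"
    by (rule continuous_on_diff)
  then show ?thesis
    by (rule continuous_on_cong[THEN iffD1, rotated 2]) (auto simp: D_Po_term_eq)
qed

lemma D_Po_tendsto_at_right_0: "(D_Po \<longlongrightarrow> D_Po 0) (at_right 0)"
proof -
  have "uniform_limit {0..1} (\<lambda>N t. \<Sum>r<N. D_Po_term t r) (\<lambda>t. \<Sum>r. D_Po_term t r) sequentially"
    using abs_D_Po_term_le_majorant by (intro Weierstrass_m_test[OF _ summable_D_Po_term_majorant]) auto
  then have "continuous_on {0..1} (\<lambda>t. \<Sum>r. D_Po_term t r)"
    by (rule uniform_limit_theorem[rotated]) (auto intro!: always_eventually continuous_on_sum continuous_on_D_Po_term)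
  then have "continuous_on {0..1} D_Po"
    by (simp add: D_Po_def[abs_def])
  then show ?thesis
    by (rule continuous_on_Icc_at_rightD) simp
qed

lemma D_Po_nonneg:
  assumes "0 \<le> t"
  shows "0 \<le> D_Po t"
proof -
  have "Pt t r - Qt t r \<le> D_Po_term t r" for r
    unfolding D_Po_term_def log_ratio_def using assms by (intro diff_le_mult_ln_div Pt_nonneg Qt_pos)
  moreover have "(\<lambda>r. Pt t r - Qt t r) sums (1 - 1)"
    by (intro sums_diff Pt_sums Qt_sums)
  moreover have "D_Po_term t sums D_Po t"
  proof -
    have "summable (\<lambda>r. \<bar>D_Po_term t r\<bar>)"
    proof (cases "t = 0")
      case True
      then show ?thesis
        using abs_D_Po_term_le_majorant[of 0]
        by (intro summable_comparison_test'[OF summable_D_Po_term_majorant]) auto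
    next
      case False
      with assms show ?thesis
        by (intro summable_abs_if_dominated[of _ "log_ratio_const t t" t] abs_D_Po_term_le) auto
    qed
    then show ?thesis
      unfolding D_Po_def by (rule summable_sums[OF summable_rabs_cancel])
  qed
  ultimately have "1 - 1 \<le> D_Po t"
    by (rule sums_le)
  then show ?thesis
    by simp
qed

text \<open>By convexity, \<open>D(P\<^sub>t \<parallel> Po(\<lambda> + t)) \<le> \<Sum>\<^sub>k P(k) D(\<delta>\<^sub>k * Po(t) \<parallel> Po(\<lambda> + t))\<close>, and each
  summand is bounded via \<open>poisson_ratio_bound\<close>.\<close>

definition D_Po_upper :: "real \<Rightarrow> real" where
  "D_Po_upper t = lam + t * ln (t / (lam + t))
     + (\<Sum>k\<le>n. pmf P k * real k * (ln (t + real k) - ln (lam + t)))"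

lemma D_Po_term_le_mixture:
  assumes t: "0 < t"
  shows "D_Po_term t r \<le>
    (\<Sum>k\<le>n. pmf P k * shift_seq k (\<lambda>j. poisson_weight t j * poisson_ratio_bound t (lam + t) k j) r)"
proof -
  have "D_Po_term t r \<le> (\<Sum>k\<le>n. pmf P k *
      (shift_seq k (poisson_weight t) r * ln (shift_seq k (poisson_weight t) r / Qt t r)))"
    unfolding D_Po_term_def log_ratio_def Pt_def using t Qt_pos[of t r]
    by (intro jensen_mult_ln_div) (auto simp: sum_pmf shift_seq_def poisson_weight_nonneg)
  also have "\<dots> \<le> (\<Sum>k\<le>n. pmf P k *
      shift_seq k (\<lambda>j. poisson_weight t j * poisson_ratio_bound t (lam + t) k j) r)"
  proof (intro sum_mono mult_left_mono pmf_nonneg)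
    fix k
    show "shift_seq k (poisson_weight t) r * ln (shift_seq k (poisson_weight t) r / Qt t r)
        \<le> shift_seq k (\<lambda>j. poisson_weight t j * poisson_ratio_bound t (lam + t) k j) r"
    proof (cases "k \<le> r")
      case True
      then have "ln (poisson_weight t (r - k) / Qt t r) \<le> poisson_ratio_bound t (lam + t) k (r - k)"
        using ln_poisson_weight_ratio_le[OF t, of "lam + t" "r - k" k] t lam_pos by (simp add: Qt_def)
      then show ?thesis
        using True poisson_weight_pos[OF t, of "r - k"] by (simp add: shift_seq_def mult_left_mono)
    qed (simp add: shift_seq_def)
  qed
  finally show ?thesis .
qed

lemma mixture_bound_sums:
  assumes t: "0 < t"
  shows "(\<lambda>r. \<Sum>k\<le>n. pmf P k * shift_seq k (\<lambda>j. poisson_weight t j * poisson_ratio_bound t (lam + t) k j) r)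
    sums D_Po_upper t"
proof -
  have "(\<lambda>r. \<Sum>k\<le>n. pmf P k * shift_seq k (\<lambda>j. poisson_weight t j * poisson_ratio_bound t (lam + t) k j) r)
    sums (\<Sum>k\<le>n. pmf P k * (lam + t - t + t * ln (t / (lam + t)) + real k * (ln (t + real k) - ln (lam + t))))"
    using t by (intro sums_sum sums_mult shift_seq_sums poisson_ratio_bound_sums)
  also have "(\<Sum>k\<le>n. pmf P k * (lam + t - t + t * ln (t / (lam + t)) + real k * (ln (t + real k) - ln (lam + t))))
      = (\<Sum>k\<le>n. lam * pmf P k + t * ln (t / (lam + t)) * pmf P k
          + pmf P k * real k * (ln (t + real k) - ln (lam + t)))"
    by (intro sum.cong) (simp_all add: algebra_simps)
  also have "\<dots> = lam * (\<Sum>k\<le>n. pmf P k) + t * ln (t / (lam + t)) * (\<Sum>k\<le>n. pmf P k)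
      + (\<Sum>k\<le>n. pmf P k * real k * (ln (t + real k) - ln (lam + t)))"
    by (simp add: sum.distrib sum_distrib_left)
  also have "\<dots> = D_Po_upper t"
    by (simp add: sum_pmf D_Po_upper_def)
  finally show ?thesis .
qed

lemma D_Po_le_upper: "0 < t \<Longrightarrow> D_Po t \<le> D_Po_upper t"
  unfolding D_Po_def
  by (rule sums_le[OF D_Po_term_le_mixture _ mixture_bound_sums])
     (auto intro!: summable_sums summable_if_dominated abs_D_Po_term_le)

lemma D_Po_upper_tendsto_0: "(D_Po_upper \<longlongrightarrow> 0) at_top"
proof -
  have "((\<lambda>t. t * ln (t / (lam + t))) \<longlongrightarrow> - lam) at_top"
    using lam_pos by real_asymp
  moreover have "((\<lambda>t. ln (t + real k) - ln (lam + t)) \<longlongrightarrow> 0) at_top" for k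
    using lam_pos by real_asymp
  ultimately have "(D_Po_upper \<longlongrightarrow> lam + - lam + (\<Sum>k\<le>n. pmf P k * real k * 0)) at_top"
    unfolding D_Po_upper_def[abs_def] by (intro tendsto_intros)
  then show ?thesis
    by simp
qed

lemma D_Po_tendsto_0: "(D_Po \<longlongrightarrow> 0) at_top"
proof (rule tendsto_sandwich[OF _ _ tendsto_const D_Po_upper_tendsto_0])
  show "\<forall>\<^sub>F t in at_top. 0 \<le> D_Po t"
    using eventually_gt_at_top[of 0] by eventually_elim (simp add: D_Po_nonneg)
  show "\<forall>\<^sub>F t in at_top. D_Po t \<le> D_Po_upper t"
    using eventually_gt_at_top[of 0] by eventually_elim (rule D_Po_le_upper)
qed

section \<open>The integral identity\<close>

lemma rel_entropy_P_Po_eq_D_Po: "rel_entropy (pmf P) (pmf (Po lam)) = ereal (D_Po 0)"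
proof -
  have "pmf P = Pt 0" "pmf (Po lam) = Qt 0"
    using lam_pos by (auto simp: fun_eq_iff Pt_0 pmf_Po Qt_def)
  moreover have "summable (\<lambda>r. \<bar>Pt 0 r * ln (Pt 0 r / Qt 0 r)\<bar>)"
    using abs_D_Po_term_le_majorant[of 0]
    by (intro summable_comparison_test'[OF summable_D_Po_term_majorant])
       (auto simp: D_Po_term_def log_ratio_def)
  moreover have "Qt 0 r \<noteq> 0" for r
    using Qt_pos[of 0 r] by simp
  ultimately show ?thesis
    using rel_entropy_eq_suminf[of "Pt 0" "Qt 0"] by (simp add: D_Po_def D_Po_term_def log_ratio_def)
qed

lemma rel_entropy_tilde_eq_D_tilde:
  assumes t: "0 < t"
  shows "rel_entropy (pmf (add_poisson P t)) (\<lambda>r. real (r + 1) * pmf (add_poisson P t) (r + 1) / (lam + t))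
    = ereal (D_tilde t)"
proof -
  have "pmf (add_poisson P t) = Pt t" "(\<lambda>r. real (r + 1) * pmf (add_poisson P t) (r + 1) / (lam + t)) = Pt_tilde t"
    using t by (auto simp: fun_eq_iff pmf_add_poisson_eq_Pt Pt_tilde_def)
  moreover have "Pt_tilde t r \<noteq> 0" if "0 < Pt t r" for r
    using that t lam_pos Pt_pos[OF t, of "r + 1"] supp_min_le_if_Pt_nonzero[of t r]
    by (simp add: Pt_tilde_def)
  ultimately show ?thesis
    using summable_abs_D_tilde_term[OF t] rel_entropy_eq_suminf[of "Pt t" "Pt_tilde t"]
    by (simp add: D_tilde_def D_tilde_term_def)
qed

lemma nn_integral_rel_entropy_tilde:
  "(\<integral>\<^sup>+ t\<in>{0..}. e2ennreal (rel_entropy (pmf (add_poisson P t))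
      (\<lambda>r. real (r + 1) * pmf (add_poisson P t) (r + 1) / (lam + t))) \<partial>lborel)
    = (\<integral>\<^sup>+ t\<in>{0<..}. ennreal (D_tilde t) \<partial>lborel)"
proof (intro nn_integral_cong_AE)
  show "AE t in lborel. e2ennreal (rel_entropy (pmf (add_poisson P t))
      (\<lambda>r. real (r + 1) * pmf (add_poisson P t) (r + 1) / (lam + t))) * indicator {0..} t
    = ennreal (D_tilde t) * indicator {0<..} t"
    using AE_lborel_singleton[of 0]
  proof eventually_elim
    case (elim t)
    show ?case
    proof (cases "0 < t")
      case True
      then show ?thesis
        by (simp only: rel_entropy_tilde_eq_D_tilde) (simp add: indicator_def)
    qed (use elim in \<open>simp add: indicator_def\<close>)
  qed
qed

theorem rel_entropy_Po_eq_integral: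
  "rel_entropy (pmf P) (pmf (Po lam)) =
     enn2ereal (\<integral>\<^sup>+ t\<in>{0..}. e2ennreal (rel_entropy (pmf (add_poisson P t))
        (\<lambda>r. real (r + 1) * pmf (add_poisson P t) (r + 1) / (lam + t))) \<partial>lborel)"
proof -
  have "(\<integral>\<^sup>+ t\<in>{0<..}. ennreal (D_tilde t) \<partial>lborel) = ennreal (D_Po 0 - 0)"
    using D_Po_has_derivative isCont_D_tilde D_tilde_nonneg D_Po_tendsto_at_right_0 D_Po_tendsto_0
    by (rule nn_integral_FTC_greaterThan)
  then show ?thesis
    unfolding rel_entropy_P_Po_eq_D_Po nn_integral_rel_entropy_tilde using D_Po_nonneg[of 0] by simp
qed

end

theorem proposition4:
  fixes n :: nat and p :: "nat \<Rightarrow> real" and lam :: real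
  assumes p_range: "\<And>i. i < n \<Longrightarrow> 0 \<le> p i \<and> p i \<le> 1"
    and lambda_def: "lam = (\<Sum>i<n. p i)"
    and lambda_pos: "lam > 0"
  shows "rel_entropy (pmf (bernoulli_sum_pmf n p)) (pmf (Po lam)) =
         enn2ereal (\<integral>\<^sup>+ t\<in>{0..}.
            e2ennreal (rel_entropy (\<lambda>r. pmf (add_poisson (bernoulli_sum_pmf n p) t) r)
                                   (\<lambda>r. real (r + 1) * pmf (add_poisson (bernoulli_sum_pmf n p) t) (r + 1)
                                          / (lam + t)))
          \<partial>lborel)"
proof -
  interpret poisson_smoothing "bernoulli_sum_pmf n p" n lam
    using set_pmf_bernoulli_sum_pmf expectation_bernoulli_sum_pmf[OF p_range] lambda_def lambda_pos
    by unfold_locales auto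
  show ?thesis
    by (rule rel_entropy_Po_eq_integral)
qed

end
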